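(* Let $n\ge3$, let $S_n$ act on $V=\mathbb{C}^n$ by permutations, fix $a,b\in\mathbb{C}$, let $x$ be a $5$-cycle and $y$ a $3$-cycle, and let $\phi_{x,y}$ be the corresponding summand of the $(xy)$-component of $\phi(\kappa^C_{\mathrm{penta}},\kappa^L_{\mathrm{tri}})$. For basis vectors $e_i,e_j,e_k$: (1) if $e_i,e_j\in V^y$, then $\phi_{x,y}(e_i,e_j,e_k)=0$; (2) if $e_i\in V^y\cap V^x$, then $\phi_{x,y}(e_i,e_j,e_k)=0$; (3) if $e_i\in V^y\setminus V^x$ and $e_j\notin V^y$, then $\phi_{x,y}(e_i,e_j,ye_j)=2(a-b)^3\big[\delta_y(xe_i)-2\delta_y(x^2e_i)+2\delta_y(x^{-2}e_i)-\delta_y(x^{-1}e_i)\big]$; (4) if $e_i\notin V^y$, then $\phi_{x,y}(e_i,ye_i,y^2e_i)=0$.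
   Context: $S_n$ acts by $\sigma e_i=e_{\sigma(i)}$; $V^g$ is the fixed space of $g$; $\delta_y(v)=1$ if $v\in V^y$ and $0$ otherwise. $\kappa^L_{\mathrm{tri}}$ is the linear 2-cochain supported on 3-cycles with $\kappa^L_{(ijk)}(e_i,e_j)=\kappa^L_{(ijk)}(e_j,e_k)=\kappa^L_{(ijk)}(e_k,e_i)=a(e_i+e_j+e_k)+b\sum_{l\notin\{i,j,k\}}e_l$ and $\kappa^L_{(ijk)}(e_l,e_m)=0$ whenever $e_l$ or $e_m$ lies in $V^{(ijk)}$. $\kappa^C_{\mathrm{penta}}$ is the constant 2-cochain with $\kappa^C_g=0$ unless $g$ is a 5-cycle, and for a 5-cycle $g$, $\kappa^C_g(e_i,e_j)=(a-b)^2([g]_{ij}-[g]_{ji}-2[g^2]_{ij}+2[g^2]_{ji})$, where $[h]_{ij}=1$ if $i=h(j)$ and $0$ otherwise. For $\alpha$ constant and $\beta$ linear, $\phi(\alpha,\beta)_g=\sum_{xy=g}\phi_{x,y}$ with $\phi_{x,y}(v_1,v_2,v_3)=\alpha_x(v_1+yv_1,\beta_y(v_2,v_3))+\alpha_x(v_2+yv_2,\beta_y(v_3,v_1))+\alpha_x(v_3+yv_3,\beta_y(v_1,v_2))$; here $\alpha=\kappa^C_{\mathrm{penta}}$, $\beta=\kappa^L_{\mathrm{tri}}$. *)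

theory Defs
  imports Complex_Main "HOL-Combinatorics.Cycles"
begin

text \<open>V = C^n, vectors are functions nat => complex, coordinates indexed by {..<n}
  (entries outside {..<n} are zero for genuine elements of V).\<close>

definition ev :: "nat \<Rightarrow> nat \<Rightarrow> complex" where
  "ev i = (\<lambda>l. if l = i then 1 else 0)"

text \<open>Permutation action: act s (ev i) = ev (s i).\<close>
definition act :: "(nat \<Rightarrow> nat) \<Rightarrow> (nat \<Rightarrow> complex) \<Rightarrow> (nat \<Rightarrow> complex)" where
  "act s v = (\<lambda>l. v (inv s l))"

definition vadd :: "(nat \<Rightarrow> complex) \<Rightarrow> (nat \<Rightarrow> complex) \<Rightarrow> (nat \<Rightarrow> complex)" where
  "vadd u v = (\<lambda>l. u l + v l)"

definition fixsp :: "nat \<Rightarrow> (nat \<Rightarrow> nat) \<Rightarrow> (nat \<Rightarrow> complex) set" where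
  "fixsp n g = {v. (\<forall>l\<ge>n. v l = 0) \<and> act g v = v}"

definition delta :: "nat \<Rightarrow> (nat \<Rightarrow> nat) \<Rightarrow> (nat \<Rightarrow> complex) \<Rightarrow> complex" where
  "delta n y v = (if v \<in> fixsp n y then 1 else 0)"

definition is_kcycle :: "nat \<Rightarrow> nat \<Rightarrow> (nat \<Rightarrow> nat) \<Rightarrow> bool" where
  "is_kcycle k n g = (\<exists>cs. cycle cs \<and> length cs = k \<and> set cs \<subseteq> {..<n} \<and> g = cycle_of_list cs)"

text \<open>kappa^L_tri on basis vectors for a 3-cycle g = (i j k) (i -> j -> k -> i):
  value w_g = a(e_i+e_j+e_k) + b(sum of the other e_l) on the pairs (e_i,e_j),(e_j,e_k),(e_k,e_i),
  extended as an alternating form (so -w_g on the reversed pairs) and zero if an argument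
  is fixed by g.\<close>
definition wL :: "nat \<Rightarrow> complex \<Rightarrow> complex \<Rightarrow> (nat \<Rightarrow> nat) \<Rightarrow> nat \<Rightarrow> complex" where
  "wL n a b g = (\<lambda>t. if t < n then (if g t \<noteq> t then a else b) else 0)"

definition kLbasis :: "(nat \<Rightarrow> nat) \<Rightarrow> nat \<Rightarrow> nat \<Rightarrow> complex" where
  "kLbasis g l m =
     (if g l \<noteq> l \<and> g m \<noteq> m then
        (if m = g l then 1 else if l = g m then -1 else 0)
      else 0)"

definition kappaL_tri :: "nat \<Rightarrow> complex \<Rightarrow> complex \<Rightarrow> (nat \<Rightarrow> nat)
    \<Rightarrow> (nat \<Rightarrow> complex) \<Rightarrow> (nat \<Rightarrow> complex) \<Rightarrow> (nat \<Rightarrow> complex)" where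
  "kappaL_tri n a b g v1 v2 =
     (if is_kcycle 3 n g then
        (\<lambda>t. (\<Sum>l<n. \<Sum>m<n. v1 l * v2 m * kLbasis g l m) * wL n a b g t)
      else (\<lambda>t. 0))"

definition pm :: "(nat \<Rightarrow> nat) \<Rightarrow> nat \<Rightarrow> nat \<Rightarrow> complex" where
  "pm h i j = (if i = h j then 1 else 0)"

definition kappaC_penta :: "nat \<Rightarrow> complex \<Rightarrow> complex \<Rightarrow> (nat \<Rightarrow> nat)
    \<Rightarrow> (nat \<Rightarrow> complex) \<Rightarrow> (nat \<Rightarrow> complex) \<Rightarrow> complex" where
  "kappaC_penta n a b g v1 v2 =
     (if is_kcycle 5 n g then
        (\<Sum>i<n. \<Sum>j<n. v1 i * v2 j *
           ((a - b)^2 * (pm g i j - pm g j i - 2 * pm (g \<circ> g) i j + 2 * pm (g \<circ> g) j i)))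
      else 0)"

definition phi_xy :: "nat \<Rightarrow> complex \<Rightarrow> complex \<Rightarrow> (nat \<Rightarrow> nat) \<Rightarrow> (nat \<Rightarrow> nat)
    \<Rightarrow> (nat \<Rightarrow> complex) \<Rightarrow> (nat \<Rightarrow> complex) \<Rightarrow> (nat \<Rightarrow> complex) \<Rightarrow> complex" where
  "phi_xy n a b x y v1 v2 v3 =
       kappaC_penta n a b x (vadd v1 (act y v1)) (kappaL_tri n a b y v2 v3)
     + kappaC_penta n a b x (vadd v2 (act y v2)) (kappaL_tri n a b y v3 v1)
     + kappaC_penta n a b x (vadd v3 (act y v3)) (kappaL_tri n a b y v1 v2)"

end

theory Submission imports Defs begin

text \<open>On basis vectors \<open>\<kappa>\<^sup>L_tri(e\<^sub>j, e\<^sub>k) = c\<^sub>j\<^sub>k w\<^sub>y\<close>, where \<open>c\<close> is the \<open>\<plusminus>1\<close> pattern of the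
  3-cycle \<open>y\<close> (zero as soon as an argument is fixed by \<open>y\<close>) and \<open>w\<^sub>y\<close> takes the value \<open>a\<close> on the
  support of \<open>y\<close> and \<open>b\<close> off it. Pairing with \<open>\<kappa>\<^sup>C_penta\<close> the constant part of \<open>w\<^sub>y\<close>
  cancels, and \<open>\<kappa>\<^sup>C\<^sub>x(e\<^sub>p, w\<^sub>y) = (a - b)\<^sup>3 (D(xp) - D(x\<^sup>-\<^sup>1p) + 2D(x\<^sup>-\<^sup>2p) - 2D(x\<^sup>2p))\<close> with
  \<open>D\<close> the fixed-point indicator of \<open>y\<close>. So \<open>\<phi>\<^sub>x\<^sub>,\<^sub>y(e\<^sub>i, e\<^sub>j, e\<^sub>k)\<close> is an explicit combination of
  the \<open>c\<close>'s and these coefficients, from which (1)-(3) are read off. In (4) all three \<open>c\<close>'s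
  are 1 and the value is twice the sum of the coefficient over the support of \<open>y\<close>; it
  vanishes because \<open>x\<close> maps as many support points into the support as \<open>x\<^sup>-\<^sup>1\<close> does, and
  likewise for \<open>x\<^sup>2\<close>.\<close>

lemma act_ev:
  assumes "bij s"
  shows "act s (ev i) = ev (s i)"
proof -
  have "inv s l = i \<longleftrightarrow> l = s i" for l
    using assms by (metis bij_inv_eq_iff)
  then show ?thesis
    unfolding act_def ev_def by (auto simp: fun_eq_iff)
qed

lemma sum_ev_mult:
  assumes "p < n"
  shows "(\<Sum>l<n. ev p l * h l) = h p"
proof -
  have "(\<Sum>l<n. ev p l * h l) = (\<Sum>l<n. if l = p then h l else 0)"
    by (intro sum.cong) (auto simp: ev_def)
  with assms show ?thesis by simp
qed

lemma ev_eq_iff: "ev i = ev j \<longleftrightarrow> i = j"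
  unfolding ev_def by (metis one_neq_zero)

lemma ev_in_fixsp_iff: "bij g \<Longrightarrow> ev t \<in> fixsp n g \<longleftrightarrow> t < n \<and> g t = t"
  unfolding fixsp_def by (auto simp: act_ev ev_eq_iff) (auto simp: ev_def split: if_splits)

lemma delta_ev: "bij g \<Longrightarrow> t < n \<Longrightarrow> delta n g (ev t) = of_bool (g t = t)"
  by (simp add: delta_def ev_in_fixsp_iff)

lemma sum_mult_pm_left:
  assumes "g permutes {..<n}" "p < n"
  shows "(\<Sum>j<n. w j * pm g p j) = w (inv g p)"
proof -
  have "p = g j \<longleftrightarrow> j = inv g p" for j
    using permutes_inverses[OF assms(1)] by metis
  then have "(\<Sum>j<n. w j * pm g p j) = (\<Sum>j<n. if j = inv g p then w j else 0)"
    by (intro sum.cong) (auto simp: pm_def)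
  then show ?thesis
    using assms permutes_in_image[OF permutes_inv[OF assms(1)]] by simp
qed

lemma sum_mult_pm_right:
  assumes "g permutes {..<n}" "p < n"
  shows "(\<Sum>j<n. w j * pm g j p) = w (g p)"
proof -
  have "(\<Sum>j<n. w j * pm g j p) = (\<Sum>j<n. if j = g p then w j else 0)"
    by (intro sum.cong) (auto simp: pm_def)
  then show ?thesis
    using assms permutes_in_image[OF assms(1)] by simp
qed

lemma card_inter_preimage_inv:
  assumes "bij g"
  shows "card (M \<inter> {t. inv g t \<in> M}) = card (M \<inter> {t. g t \<in> M})"
proof -
  have "g (inv g s) = s" "inv g (g s) = s" for s
    using assms by (metis bij_inv_eq_iff)+
  then have "M \<inter> {t. inv g t \<in> M} = g ` (M \<inter> {t. g t \<in> M})"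
    by (auto intro: image_eqI[of _ g "inv g _"])
  then show ?thesis
    using card_image[OF inj_on_subset[OF bij_is_inj[OF assms] subset_UNIV]] by simp
qed

lemma is_kcycle_permutes: "is_kcycle k n g \<Longrightarrow> g permutes {..<n}"
  unfolding is_kcycle_def using cycle_permutes permutes_subset by blast

lemma is_kcycle_3_explicit:
  assumes "is_kcycle 3 n y"
  obtains p q r where "distinct [p, q, r]"
    "\<And>t. y t = (if t = p then q else if t = q then r else if t = r then p else t)"
proof -
  obtain cs where cs: "cycle cs" "length cs = 3" "y = cycle_of_list cs"
    using assms unfolding is_kcycle_def by blast
  then obtain p q r where "cs = [p, q, r]"
    by (metis length_0_conv length_Suc_conv numeral_3_eq_3)
  with cs show ?thesis
    by (intro that) (auto simp: transpose_def)
qed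

lemma is_kcycle_3_orbit:
  assumes "is_kcycle 3 n y" "y i \<noteq> i"
  shows "y (y (y i)) = i" "distinct [i, y i, y (y i)]"
    "{u. y u \<noteq> u} = {i, y i, y (y i)}"
proof -
  obtain p q r where d: "distinct [p, q, r]"
    and y: "\<And>t. y t = (if t = p then q else if t = q then r else if t = r then p else t)"
    using is_kcycle_3_explicit[OF assms(1)] by blast
  have "i = p \<or> i = q \<or> i = r"
    using assms(2) y by metis
  then show "y (y (y i)) = i" "distinct [i, y i, y (y i)]" "{u. y u \<noteq> u} = {i, y i, y (y i)}"
    using d by (auto simp: y)
qed

lemma kappaC_penta_vadd_left:
  "kappaC_penta n a b x (vadd u v) w = kappaC_penta n a b x u w + kappaC_penta n a b x v w"
  by (simp add: kappaC_penta_def vadd_def distrib_right sum.distrib)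

lemma kappaC_penta_scale_right:
  "kappaC_penta n a b x u (\<lambda>t. c * w t) = c * kappaC_penta n a b x u w"
  by (simp add: kappaC_penta_def sum_distrib_left mult_ac)

lemma kappaC_penta_ev_left:
  assumes x: "is_kcycle 5 n x" and p: "p < n"
  shows "kappaC_penta n a b x (ev p) w =
    (a - b)^2 * (w (inv x p) - w (x p) - 2 * w (inv x (inv x p)) + 2 * w (x (x p)))"
proof -
  have xp: "x permutes {..<n}" using x by (rule is_kcycle_permutes)
  then have xxp: "(x \<circ> x) permutes {..<n}" by (simp add: permutes_compose)
  have "kappaC_penta n a b x (ev p) w = (\<Sum>j<n. w j *
      ((a - b)^2 * (pm x p j - pm x j p - 2 * pm (x \<circ> x) p j + 2 * pm (x \<circ> x) j p)))"
    using x p unfolding kappaC_penta_def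
    by (simp add: mult.assoc sum_ev_mult flip: sum_distrib_left)
  also have "\<dots> = (a - b)^2 *
      ((\<Sum>j<n. w j * pm x p j) - (\<Sum>j<n. w j * pm x j p)
       - 2 * (\<Sum>j<n. w j * pm (x \<circ> x) p j) + 2 * (\<Sum>j<n. w j * pm (x \<circ> x) j p))"
    by (simp add: algebra_simps sum.distrib sum_subtractf sum_distrib_left)
  also have "\<dots> = (a - b)^2 * (w (inv x p) - w (x p) - 2 * w (inv (x \<circ> x) p) + 2 * w (x (x p)))"
    using p by (simp add: sum_mult_pm_left sum_mult_pm_right xp xxp)
  also have "inv (x \<circ> x) = inv x \<circ> inv x"
    using xp by (simp add: o_inv_distrib permutes_bij)
  finally show ?thesis by simp
qed

lemma kappaL_tri_ev:
  assumes "is_kcycle 3 n y" "j < n" "k < n"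
  shows "kappaL_tri n a b y (ev j) (ev k) = (\<lambda>t. kLbasis y j k * wL n a b y t)"
  using assms by (simp add: kappaL_tri_def mult.assoc sum_ev_mult flip: sum_distrib_left)

lemma kLbasis_fixed:
  "y l = l \<Longrightarrow> kLbasis y l m = 0" "y m = m \<Longrightarrow> kLbasis y l m = 0"
  by (simp_all add: kLbasis_def)

lemma kLbasis_succ: "bij y \<Longrightarrow> y l \<noteq> l \<Longrightarrow> kLbasis y l (y l) = 1"
  by (simp add: kLbasis_def bij_pointE bij_is_inj inj_eq)

definition penta_tri_coeff :: "(nat \<Rightarrow> nat) \<Rightarrow> (nat \<Rightarrow> nat) \<Rightarrow> nat \<Rightarrow> complex" where
  "penta_tri_coeff x y p =
     of_bool (y (x p) = x p) - of_bool (y (inv x p) = inv x p)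
   + 2 * of_bool (y (inv x (inv x p)) = inv x (inv x p)) - 2 * of_bool (y (x (x p)) = x (x p))"

lemma kappaC_penta_ev_wL:
  assumes x: "is_kcycle 5 n x" and p: "p < n"
  shows "kappaC_penta n a b x (ev p) (wL n a b y) = (a - b)^3 * penta_tri_coeff x y p"
proof -
  have xp: "x permutes {..<n}" using x by (rule is_kcycle_permutes)
  have wL: "t < n \<Longrightarrow> wL n a b y t = a - (a - b) * of_bool (y t = t)" for t
    by (simp add: wL_def)
  have "x p < n" "inv x p < n" "x (x p) < n" "inv x (inv x p) < n"
    using p permutes_in_image[OF xp] permutes_in_image[OF permutes_inv[OF xp]] by auto
  then show ?thesis
    by (simp add: kappaC_penta_ev_left[OF x p] wL penta_tri_coeff_def power3_eq_cube
        power2_eq_square algebra_simps)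
qed

lemma phi_xy_ev:
  assumes x: "is_kcycle 5 n x" and y: "is_kcycle 3 n y" and "i < n" "j < n" "k < n"
  shows "phi_xy n a b x y (ev i) (ev j) (ev k) = (a - b)^3 *
      (kLbasis y j k * (penta_tri_coeff x y i + penta_tri_coeff x y (y i))
     + kLbasis y k i * (penta_tri_coeff x y j + penta_tri_coeff x y (y j))
     + kLbasis y i j * (penta_tri_coeff x y k + penta_tri_coeff x y (y k)))"
proof -
  have yp: "y permutes {..<n}" using y by (rule is_kcycle_permutes)
  have "y i < n" "y j < n" "y k < n"
    using assms permutes_in_image[OF yp] by auto
  with assms show ?thesis
    by (simp add: phi_xy_def act_ev permutes_bij[OF yp] kappaL_tri_ev kappaC_penta_vadd_left
        kappaC_penta_scale_right kappaC_penta_ev_wL ring_distribs)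
qed

lemma sum_support_fixed_shift:
  fixes y g :: "nat \<Rightarrow> nat"
  assumes "bij g" "finite {u. y u \<noteq> u}"
  shows "(\<Sum>t | y t \<noteq> t. of_bool (y (g t) = g t) :: complex)
       = (\<Sum>t | y t \<noteq> t. of_bool (y (inv g t) = inv g t))"
proof -
  define M where "M = {u. y u \<noteq> u}"
  have "of_bool (y u = u) = 1 - (of_bool (u \<in> M) :: complex)" for u
    by (simp add: M_def)
  then show ?thesis
    using assms card_inter_preimage_inv[OF assms(1), of M]
    by (simp add: sum_subtractf flip: M_def)
qed

lemma sum_support_penta_tri_coeff:
  assumes "bij x" "finite {u. y u \<noteq> u}"
  shows "(\<Sum>t | y t \<noteq> t. penta_tri_coeff x y t) = 0"
proof -
  have "bij (x \<circ> x)" using assms(1) by (simp add: bij_comp)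
  moreover have "inv (x \<circ> x) = inv x \<circ> inv x"
    using assms(1) by (simp add: o_inv_distrib)
  ultimately have "(\<Sum>t | y t \<noteq> t. of_bool (y (x (x t)) = x (x t)) :: complex)
      = (\<Sum>t | y t \<noteq> t. of_bool (y (inv x (inv x t)) = inv x (inv x t)))"
    using sum_support_fixed_shift[OF _ assms(2), of "x \<circ> x"] by simp
  with sum_support_fixed_shift[OF assms] show ?thesis
    by (simp add: penta_tri_coeff_def sum.distrib sum_subtractf flip: sum_distrib_left)
qed

lemma delta_act_ev:
  assumes "h permutes {..<n}" "bij y" "i < n"
  shows "delta n y (act h (ev i)) = of_bool (y (h i) = h i)"
  using assms permutes_in_image[OF assms(1), of i]
  by (simp add: act_ev delta_ev permutes_bij)

lemma penta_tri_coeff_eq_delta: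
  assumes "x permutes {..<n}" "bij y" "i < n"
  shows "penta_tri_coeff x y i =
    delta n y (act x (ev i)) - 2 * delta n y (act (x \<circ> x) (ev i))
      + 2 * delta n y (act (inv x \<circ> inv x) (ev i)) - delta n y (act (inv x) (ev i))"
  using assms by (simp add: delta_act_ev penta_tri_coeff_def permutes_compose permutes_inv)

lemma phi_xy_fixed_fixed:
  assumes "is_kcycle 5 n x" "is_kcycle 3 n y" "i < n" "j < n" "k < n" "y i = i" "y j = j"
  shows "phi_xy n a b x y (ev i) (ev j) (ev k) = 0"
  using assms by (simp add: phi_xy_ev kLbasis_fixed)

lemma phi_xy_common_fixed:
  assumes "is_kcycle 5 n x" "is_kcycle 3 n y" "i < n" "j < n" "k < n" "y i = i" "x i = i"
  shows "phi_xy n a b x y (ev i) (ev j) (ev k) = 0"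
proof -
  have "inv x i = i"
    using assms(7) permutes_bij[OF is_kcycle_permutes[OF assms(1)]] by (metis bij_inv_eq_iff)
  then have "penta_tri_coeff x y i = 0"
    using assms by (simp add: penta_tri_coeff_def)
  with assms show ?thesis
    by (simp add: phi_xy_ev kLbasis_fixed)
qed

lemma phi_xy_fixed_moved:
  assumes "is_kcycle 5 n x" "is_kcycle 3 n y" "i < n" "j < n" "y i = i" "y j \<noteq> j"
  shows "phi_xy n a b x y (ev i) (ev j) (ev (y j)) = 2 * (a - b)^3 * penta_tri_coeff x y i"
proof -
  have "bij y" using permutes_bij[OF is_kcycle_permutes[OF assms(2)]] .
  moreover have "y j < n"
    using assms permutes_in_image[OF is_kcycle_permutes[OF assms(2)]] by auto
  ultimately show ?thesis
    using assms by (simp add: phi_xy_ev kLbasis_fixed kLbasis_succ)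
qed

lemma phi_xy_orbit:
  assumes x: "is_kcycle 5 n x" and y: "is_kcycle 3 n y" and "i < n" "y i \<noteq> i"
  shows "phi_xy n a b x y (ev i) (ev (y i)) (ev (y (y i))) = 0"
proof -
  have yp: "y permutes {..<n}" using y by (rule is_kcycle_permutes)
  note orbit = is_kcycle_3_orbit[OF y \<open>y i \<noteq> i\<close>]
  have "y i < n" "y (y i) < n"
    using assms permutes_in_image[OF yp] by auto
  moreover have "kLbasis y i (y i) = 1" "kLbasis y (y i) (y (y i)) = 1"
    "kLbasis y (y (y i)) i = 1"
    using kLbasis_succ[OF permutes_bij[OF yp]] orbit(1,2) \<open>y i \<noteq> i\<close>
    by (metis distinct_length_2_or_more)+
  moreover have "penta_tri_coeff x y i + penta_tri_coeff x y (y i)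
      + penta_tri_coeff x y (y (y i)) = 0"
    using sum_support_penta_tri_coeff[OF permutes_bij[OF is_kcycle_permutes[OF x]], of y]
      orbit(2,3) by (simp add: add.assoc)
  ultimately show ?thesis
    using assms orbit by (simp add: phi_xy_ev algebra_simps)
qed

theorem lemma7p6:
  fixes n :: nat and a b :: complex and x y :: "nat \<Rightarrow> nat"
  assumes "n \<ge> 3"
    and "is_kcycle 5 n x"
    and "is_kcycle 3 n y"
  shows
    "(\<forall>i<n. \<forall>j<n. \<forall>k<n.
        ev i \<in> fixsp n y \<and> ev j \<in> fixsp n y \<longrightarrow>
        phi_xy n a b x y (ev i) (ev j) (ev k) = 0)
   \<and> (\<forall>i<n. \<forall>j<n. \<forall>k<n.
        ev i \<in> fixsp n y \<inter> fixsp n x \<longrightarrow>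
        phi_xy n a b x y (ev i) (ev j) (ev k) = 0)
   \<and> (\<forall>i<n. \<forall>j<n.
        ev i \<in> fixsp n y - fixsp n x \<and> ev j \<notin> fixsp n y \<longrightarrow>
        phi_xy n a b x y (ev i) (ev j) (act y (ev j)) =
          2 * (a - b)^3 * (delta n y (act x (ev i)) - 2 * delta n y (act (x \<circ> x) (ev i))
                          + 2 * delta n y (act (inv x \<circ> inv x) (ev i)) - delta n y (act (inv x) (ev i))))
   \<and> (\<forall>i<n.
        ev i \<notin> fixsp n y \<longrightarrow>
        phi_xy n a b x y (ev i) (act y (ev i)) (act (y \<circ> y) (ev i)) = 0)"
proof -
  have xp: "x permutes {..<n}" and yp: "y permutes {..<n}"
    using assms(2,3) by (simp_all add: is_kcycle_permutes)
  then have "bij x" and yb: "bij y" and "bij (y \<circ> y)"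
    by (simp_all add: permutes_bij bij_comp)
  with assms(2,3) show ?thesis
    by (auto simp: ev_in_fixsp_iff act_ev[OF yb] act_ev[OF \<open>bij (y \<circ> y)\<close>]
        phi_xy_fixed_fixed phi_xy_common_fixed phi_xy_fixed_moved phi_xy_orbit
        penta_tri_coeff_eq_delta[OF xp yb])
qed

end
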